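(* Let $X$ be an $\mathbb R^d$-valued semimartingale on a filtered probability space with right-continuous filtration, and let $n\in\mathbb N^*$. The following statements are equivalent: (i) $X$ is a polynomial process of order $n$; (ii) for each $m\in\{1,\dots,n\}$ the vector-valued process $(X^\lambda)_{\lambda\in\mathbb N^d_m\setminus\{0\}}$ is a polynomial process of order 1; (iii) for each $m\in\{1,\dots,n\}$ the $\mathbb R^{(1+d)^m}$-valued process $(1,X)^{\otimes m}$ is a polynomial process of order 1, where $\otimes m$ denotes the $m$-fold Kronecker product of a vector.
   Context: Fix a filtered probability space $(\Omega,\mathscr F,(\mathscr F_t)_{t\ge0},\mathbb P)$ with right-continuous filtration. Notation: $\mathbb N=\{0,1,\dots\}$, $\mathbb N^*=\mathbb N\setminus\{0\}$; for $x\in\mathbb R^d$, $\lambda\in\mathbb N^d$: $x^\lambda=\prod_{j=1}^dx_j^{\lambda_j}$, $|\lambda|=\sum_j\lambda_j$, $\mathbb N^d_n=\{\lambda\in\mathbb N^d:|\lambda|\le n\}$; vectors indexed by sets of multiindices use a fixed ordering. An $\mathbb R^d$-valued semimartingale $X$ is a (time-inhomogeneous) polynomial process of order $n\in\mathbb N$ if $\int_0^t\mathbb E(\|X(s)\|^n)\,ds<\infty$ for all $t\ge0$ and, for every $\lambda\in\mathbb N^d_n$, there are deterministic, measurable, locally bounded functions $b^c_{\lambda,\mu}:\mathbb R_+\to\mathbb R$, $\mu\in\mathbb N^d_{|\lambda|}$, such that $X(t)^\lambda-X(0)^\lambda-\int_0^t\sum_{\mu\in\mathbb N^d_{|\lambda|}}b^c_{\lambda,\mu}(s)X(s)^\mu\,ds,\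 t\ge0,$ is a martingale (i.e. $x\mapsto x^\lambda$ lies in the domain of the extended generator $\widetilde G$ of $X$ and $\widetilde G_sx^\lambda=\sum_\mu b^c_{\lambda,\mu}(s)x^\mu$). It is time-homogeneous if the $b^c_{\lambda,\mu}$ do not depend on $t$. A vector-valued process is polynomial of order 1 in this sense exactly when its first moments are locally integrable in time and it has the form $dV(t)=(a^c(t)+A^c(t)V(t))dt+dM(t)$ with deterministic locally bounded $a^c,A^c$ and a martingale $M$. *)

theory Defs
  imports "HOL-Probability.Probability"
begin

definition rc_filtration :: "'a measure \<Rightarrow> (real \<Rightarrow> 'a measure) \<Rightarrow> bool" where
  "rc_filtration M F \<longleftrightarrow>
     prob_space M \<and>
     (\<forall>t\<ge>0. subalgebra M (F t)) \<and>
     (\<forall>s t. 0 \<le> s \<longrightarrow> s \<le> t \<longrightarrow> sets (F s) \<subseteq> sets (F t)) \<and>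
     (\<forall>t\<ge>0. sets (F t) = (\<Inter>s\<in>{t<..}. sets (F s)))"

definition adapted :: "'a measure \<Rightarrow> (real \<Rightarrow> 'a measure) \<Rightarrow> (real \<Rightarrow> 'a \<Rightarrow> real) \<Rightarrow> bool" where
  "adapted M F X \<longleftrightarrow> (\<forall>t\<ge>0. X t \<in> borel_measurable (F t))"

definition martingale :: "'a measure \<Rightarrow> (real \<Rightarrow> 'a measure) \<Rightarrow> (real \<Rightarrow> 'a \<Rightarrow> real) \<Rightarrow> bool" where
  "martingale M F X \<longleftrightarrow>
     adapted M F X \<and> (\<forall>t\<ge>0. integrable M (X t)) \<and>
     (\<forall>s t. 0 \<le> s \<longrightarrow> s \<le> t \<longrightarrow> (AE \<omega> in M. real_cond_exp M (F s) (X t) \<omega> = X s \<omega>))"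

definition stopping_time_on :: "'a measure \<Rightarrow> (real \<Rightarrow> 'a measure) \<Rightarrow> ('a \<Rightarrow> real) \<Rightarrow> bool" where
  "stopping_time_on M F \<tau> \<longleftrightarrow>
     (\<forall>\<omega>\<in>space M. 0 \<le> \<tau> \<omega>) \<and> (\<forall>t\<ge>0. {\<omega>\<in>space M. \<tau> \<omega> \<le> t} \<in> sets (F t))"

definition local_martingale :: "'a measure \<Rightarrow> (real \<Rightarrow> 'a measure) \<Rightarrow> (real \<Rightarrow> 'a \<Rightarrow> real) \<Rightarrow> bool" where
  "local_martingale M F X \<longleftrightarrow>
     (\<exists>\<tau> :: nat \<Rightarrow> 'a \<Rightarrow> real.
        (\<forall>k. stopping_time_on M F (\<tau> k)) \<and>
        (AE \<omega> in M. mono (\<lambda>k. \<tau> k \<omega>) \<and> filterlim (\<lambda>k. \<tau> k \<omega>) at_top sequentially) \<and>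
        (\<forall>k. martingale M F (\<lambda>t \<omega>. X (min t (\<tau> k \<omega>)) \<omega>)))"

definition cadlag :: "(real \<Rightarrow> real) \<Rightarrow> bool" where
  "cadlag f \<longleftrightarrow> (\<forall>t\<ge>0. continuous (at_right t) f \<and> (0 < t \<longrightarrow> (\<exists>l. (f \<longlongrightarrow> l) (at_left t))))"

definition bounded_variation_on :: "real \<Rightarrow> real \<Rightarrow> (real \<Rightarrow> real) \<Rightarrow> bool" where
  "bounded_variation_on a b f \<longleftrightarrow>
     (\<exists>C. \<forall>(p :: nat \<Rightarrow> real) N. p 0 = a \<longrightarrow> p N = b \<longrightarrow> (\<forall>k<N. p k \<le> p (Suc k)) \<longrightarrow>
          (\<Sum>k<N. \<bar>f (p (Suc k)) - f (p k)\<bar>) \<le> C)"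

definition semimartingale :: "'a measure \<Rightarrow> (real \<Rightarrow> 'a measure) \<Rightarrow> (real \<Rightarrow> 'a \<Rightarrow> real) \<Rightarrow> bool" where
  "semimartingale M F X \<longleftrightarrow>
     adapted M F X \<and> (\<forall>\<omega>\<in>space M. cadlag (\<lambda>t. X t \<omega>)) \<and>
     (\<exists>L A. local_martingale M F L \<and> adapted M F A \<and>
        (\<forall>\<omega>\<in>space M. L 0 \<omega> = 0 \<and> A 0 \<omega> = 0 \<and> cadlag (\<lambda>t. A t \<omega>) \<and>
                       (\<forall>t\<ge>0. bounded_variation_on 0 t (\<lambda>s. A s \<omega>))) \<and>
        (\<forall>t\<ge>0. \<forall>\<omega>\<in>space M. X t \<omega> = X 0 \<omega> + L t \<omega> + A t \<omega>))"

definition vsemimartingale :: "'a measure \<Rightarrow> (real \<Rightarrow> 'a measure) \<Rightarrow> 'i set \<Rightarrow> (real \<Rightarrow> 'a \<Rightarrow> 'i \<Rightarrow> real) \<Rightarrow> bool" where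
  "vsemimartingale M F I X \<longleftrightarrow> (\<forall>i\<in>I. semimartingale M F (\<lambda>t \<omega>. X t \<omega> i))"

definition vnorm :: "'i set \<Rightarrow> ('i \<Rightarrow> real) \<Rightarrow> real" where
  "vnorm I x = sqrt (\<Sum>i\<in>I. (x i)^2)"

definition multi_le :: "'i set \<Rightarrow> nat \<Rightarrow> ('i \<Rightarrow> nat) set" where
  "multi_le I n = {l. (\<forall>i. i \<notin> I \<longrightarrow> l i = 0) \<and> (\<Sum>i\<in>I. l i) \<le> n}"

definition deg :: "'i set \<Rightarrow> ('i \<Rightarrow> nat) \<Rightarrow> nat" where
  "deg I l = (\<Sum>i\<in>I. l i)"

definition mpow :: "'i set \<Rightarrow> ('i \<Rightarrow> nat) \<Rightarrow> ('i \<Rightarrow> real) \<Rightarrow> real" where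
  "mpow I l x = (\<Prod>i\<in>I. x i ^ l i)"

definition locally_bounded :: "(real \<Rightarrow> real) \<Rightarrow> bool" where
  "locally_bounded b \<longleftrightarrow> (\<forall>t\<ge>0. \<exists>C. \<forall>s\<in>{0..t}. \<bar>b s\<bar> \<le> C)"

definition polynomial_process ::
  "'a measure \<Rightarrow> (real \<Rightarrow> 'a measure) \<Rightarrow> 'i set \<Rightarrow> nat \<Rightarrow> (real \<Rightarrow> 'a \<Rightarrow> 'i \<Rightarrow> real) \<Rightarrow> bool" where
  "polynomial_process M F I n X \<longleftrightarrow>
     vsemimartingale M F I X \<and>
     (\<forall>t\<ge>0. (\<integral>\<^sup>+ s\<in>{0..t}. (\<integral>\<^sup>+ \<omega>. ennreal (vnorm I (X s \<omega>) ^ n) \<partial>M) \<partial>lborel) < \<infinity>) \<and>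
     (\<forall>l\<in>multi_le I n. \<exists>b :: ('i \<Rightarrow> nat) \<Rightarrow> real \<Rightarrow> real.
        (\<forall>\<mu>\<in>multi_le I (deg I l). b \<mu> \<in> borel_measurable borel \<and> locally_bounded (b \<mu>)) \<and>
        martingale M F (\<lambda>t \<omega>. mpow I l (X t \<omega>) - mpow I l (X 0 \<omega>)
            - (LINT s:{0..t}|lborel. (\<Sum>\<mu>\<in>multi_le I (deg I l). b \<mu> s * mpow I \<mu> (X s \<omega>)))))"

text \<open>The vector (1,x) for x indexed by {..<d}, indexed by {0..d}; and its m-fold Kronecker
  power, indexed by words js of length m over {0..d} (component = product of the entries).\<close>
definition one_ext :: "(nat \<Rightarrow> real) \<Rightarrow> nat \<Rightarrow> real" where
  "one_ext x j = (if j = 0 then 1 else x (j - 1))"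

definition kron_index :: "nat \<Rightarrow> nat \<Rightarrow> nat list set" where
  "kron_index d m = {js. length js = m \<and> set js \<subseteq> {..d}}"

definition kron_pow :: "(nat \<Rightarrow> real) \<Rightarrow> nat list \<Rightarrow> real" where
  "kron_pow y js = prod_list (map y js)"

end

theory Submission
  imports Defs
begin

text \<open>Every coordinate \<open>x\<^sup>\<lambda>\<close> of the families in (ii) and (iii) is a monomial of degree at most
  \<open>m \<le> n\<close>, and conversely every monomial of degree at most \<open>m\<close> other than \<open>1\<close> occurs among them.
  Hence a drift of \<open>x\<^sup>\<lambda>\<close> that is a polynomial of degree \<open>|\<lambda>|\<close> is the same thing as a drift that
  is affine in the coordinates of the family, which is what being polynomial of order 1 means.
  The moment conditions match because each coordinate is bounded by \<open>1 + \<parallel>x\<parallel>\<^sup>n\<close>, while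
  \<open>\<parallel>x\<parallel>\<^sup>n\<close> is bounded by a multiple of the largest pure power \<open>\<bar>x\<^sub>i\<bar>\<^sup>n\<close>, which is itself a
  coordinate at level \<open>n\<close>. Finally, the monomials are semimartingales because their compensated
  increments are martingales with a pathwise locally Lipschitz compensator.\<close>

section \<open>Nonnegative integrals of possibly non-measurable functions\<close>

lemma nn_integral_cmult_le:
  fixes c :: ennreal
  assumes "c < \<top>"
  shows "(\<integral>\<^sup>+x. c * f x \<partial>M) \<le> c * (\<integral>\<^sup>+x. f x \<partial>M)"
proof (cases "c = 0")
  case False
  show ?thesis
    unfolding nn_integral_def
  proof (rule SUP_least)
    fix u assume u: "u \<in> {g. simple_function M g \<and> g \<le> (\<lambda>x. c * f x)}"
    define v where "v x = u x / c" for x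
    have v: "simple_function M v"
      using u unfolding v_def by (auto intro!: simple_function_compose1[where g="\<lambda>y. y / c"])
    have "v \<le> f"
      using u False assms unfolding v_def le_fun_def
      by (auto intro!: divide_le_posI_ennreal simp: zero_less_iff_neq_zero)
    have "u = (\<lambda>x. c * v x)"
      unfolding v_def using False assms
      by (metis ennreal_times_divide mult.commute mult_divide_eq_ennreal top.not_eq_extremum)
    then have "integral\<^sup>S M u = c * integral\<^sup>S M v"
      using v by simp
    also have "\<dots> \<le> c * (SUP g \<in> {g. simple_function M g \<and> g \<le> f}. integral\<^sup>S M g)"
      using v \<open>v \<le> f\<close> by (intro mult_left_mono SUP_upper) auto
    finally show "integral\<^sup>S M u \<le> c * (SUP g \<in> {g. simple_function M g \<and> g \<le> f}. integral\<^sup>S M g)" .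
  qed
qed simp

lemma nn_integral_add_simple_le:
  assumes h: "simple_function M h" and h_finite: "\<And>x. h x < \<top>"
  shows "(\<integral>\<^sup>+x. h x + f x \<partial>M) \<le> (\<integral>\<^sup>+x. h x \<partial>M) + (\<integral>\<^sup>+x. f x \<partial>M)"
  unfolding nn_integral_def[of M "\<lambda>x. h x + f x"]
proof (rule SUP_least)
  fix u assume u: "u \<in> {g. simple_function M g \<and> g \<le> (\<lambda>x. h x + f x)}"
  define v where "v x = u x - h x" for x
  have v: "simple_function M v"
    using u h unfolding v_def by (auto intro!: simple_function_compose2[where h="(-)"])
  have "v \<le> f"
    using u h_finite unfolding v_def le_fun_def
    by (auto simp: ennreal_minus_le_iff) (metis h_finite less_irrefl)
  have "integral\<^sup>S M u \<le> integral\<^sup>S M (\<lambda>x. v x + h x)"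
    using u v h by (intro simple_integral_mono simple_function_add)
      (auto simp: v_def diff_add_self_ennreal not_le less_imp_le)
  also have "\<dots> = integral\<^sup>S M v + integral\<^sup>S M h"
    using v h by (simp add: simple_integral_add)
  also have "\<dots> \<le> (\<integral>\<^sup>+x. f x \<partial>M) + (\<integral>\<^sup>+x. h x \<partial>M)"
    using v \<open>v \<le> f\<close> nn_integral_eq_simple_integral[OF h]
    by (intro add_mono) (auto simp: nn_integral_def intro!: SUP_upper)
  finally show "integral\<^sup>S M u \<le> (\<integral>\<^sup>+x. h x \<partial>M) + (\<integral>\<^sup>+x. f x \<partial>M)"
    by (simp add: add.commute)
qed

definition finite_time_moment :: "'a measure \<Rightarrow> (real \<Rightarrow> 'a \<Rightarrow> real) \<Rightarrow> bool" where
  "finite_time_moment M g \<longleftrightarrow>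
     (\<forall>t\<ge>0. (\<integral>\<^sup>+ s\<in>{0..t}. (\<integral>\<^sup>+ \<omega>. ennreal (g s \<omega>) \<partial>M) \<partial>lborel) < \<infinity>)"

lemma finite_time_moment_affine_bound:
  assumes M: "prob_space M" and f: "finite_time_moment M f"
    and f_nonneg: "\<And>s \<omega>. 0 \<le> f s \<omega>" and "0 \<le> K"
    and g_le: "\<And>s \<omega>. 0 \<le> s \<Longrightarrow> \<omega> \<in> space M \<Longrightarrow> g s \<omega> \<le> K * (1 + f s \<omega>)"
  shows "finite_time_moment M g"
  unfolding finite_time_moment_def
proof (intro allI impI)
  fix t :: real assume "0 \<le> t"
  let ?F = "\<lambda>s. \<integral>\<^sup>+ \<omega>. ennreal (f s \<omega>) \<partial>M"
  have inner: "(\<integral>\<^sup>+ \<omega>. ennreal (g s \<omega>) \<partial>M) \<le> ennreal K + ennreal K * ?F s" if "0 \<le> s" for s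
  proof -
    have "(\<integral>\<^sup>+ \<omega>. ennreal (g s \<omega>) \<partial>M) \<le> (\<integral>\<^sup>+ \<omega>. ennreal K + ennreal K * ennreal (f s \<omega>) \<partial>M)"
    proof (rule nn_integral_mono)
      fix \<omega> assume "\<omega> \<in> space M"
      then have "g s \<omega> \<le> K + K * f s \<omega>"
        using g_le that by (simp add: algebra_simps)
      then show "ennreal (g s \<omega>) \<le> ennreal K + ennreal K * ennreal (f s \<omega>)"
        using \<open>0 \<le> K\<close> f_nonneg[of s \<omega>] by (metis ennreal_leI ennreal_mult' ennreal_plus mult_nonneg_nonneg)
    qed
    also have "\<dots> \<le> (\<integral>\<^sup>+ \<omega>. ennreal K \<partial>M) + (\<integral>\<^sup>+ \<omega>. ennreal K * ennreal (f s \<omega>) \<partial>M)"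
      by (rule nn_integral_add_simple_le) auto
    also have "\<dots> \<le> ennreal K + ennreal K * ?F s"
      using prob_space.emeasure_space_1[OF M] by (simp add: add_left_mono nn_integral_cmult_le)
    finally show ?thesis .
  qed
  have "(\<integral>\<^sup>+ s\<in>{0..t}. (\<integral>\<^sup>+ \<omega>. ennreal (g s \<omega>) \<partial>M) \<partial>lborel)
      \<le> (\<integral>\<^sup>+ s. ennreal K * indicator {0..t} s + ennreal K * (?F s * indicator {0..t} s) \<partial>lborel)"
    using inner by (intro nn_integral_mono) (auto split: split_indicator simp: distrib_left)
  also have "\<dots> \<le> (\<integral>\<^sup>+ s. ennreal K * indicator {0..t} s \<partial>lborel)
       + (\<integral>\<^sup>+ s. ennreal K * (?F s * indicator {0..t} s) \<partial>lborel)"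
    by (rule nn_integral_add_simple_le) (auto split: split_indicator)
  also have "\<dots> \<le> ennreal K * emeasure lborel {0..t} + ennreal K * (\<integral>\<^sup>+ s\<in>{0..t}. ?F s \<partial>lborel)"
    by (simp add: nn_integral_cmult_indicator nn_integral_cmult_le add_left_mono)
  also have "\<dots> < \<infinity>"
    using f \<open>0 \<le> t\<close> by (simp add: finite_time_moment_def ennreal_mult_less_top)
  finally show "(\<integral>\<^sup>+ s\<in>{0..t}. (\<integral>\<^sup>+ \<omega>. ennreal (g s \<omega>) \<partial>M) \<partial>lborel) < \<infinity>" .
qed

lemma cadlag_const: "cadlag (\<lambda>_. c)"
  unfolding cadlag_def by auto

lemma cadlag_mult:
  assumes "cadlag f" "cadlag g"
  shows "cadlag (\<lambda>t. f t * g t)"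
  unfolding cadlag_def
proof (intro allI impI conjI)
  fix t :: real assume "0 \<le> t"
  then show "continuous (at_right t) (\<lambda>t. f t * g t)"
    using assms unfolding cadlag_def by (intro continuous_mult') auto
  assume "0 < t"
  then obtain l1 l2 where "(f \<longlongrightarrow> l1) (at_left t)" "(g \<longlongrightarrow> l2) (at_left t)"
    using assms \<open>0 \<le> t\<close> unfolding cadlag_def by blast
  then show "\<exists>l. ((\<lambda>t. f t * g t) \<longlongrightarrow> l) (at_left t)"
    by (blast intro: tendsto_mult)
qed

lemma cadlag_power: "cadlag f \<Longrightarrow> cadlag (\<lambda>t. f t ^ k)"
  by (induction k) (auto intro: cadlag_mult cadlag_const)

lemma cadlag_prod: "(\<And>i. i \<in> I \<Longrightarrow> cadlag (f i)) \<Longrightarrow> cadlag (\<lambda>t. \<Prod>i\<in>I. f i t)"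
  by (induction I rule: infinite_finite_induct) (auto intro: cadlag_mult cadlag_const)

lemma cadlag_if_continuous_on:
  assumes "\<And>T. 0 \<le> T \<Longrightarrow> continuous_on {0..T} f"
  shows "cadlag f"
  unfolding cadlag_def
proof (intro allI impI conjI)
  fix t :: real assume "0 \<le> t"
  have "continuous_on {0..t + 1} f"
    using assms \<open>0 \<le> t\<close> by simp
  then have "continuous_on {t..t + 1} f"
    by (rule continuous_on_subset) (use \<open>0 \<le> t\<close> in auto)
  then show "continuous (at_right t) f"
    unfolding continuous_within by (intro continuous_on_Icc_at_rightD) auto
  assume "0 < t"
  then have "(f \<longlongrightarrow> f t) (at_left t)"
    using assms[of t] by (intro continuous_on_Icc_at_leftD) auto
  then show "\<exists>l. (f \<longlongrightarrow> l) (at_left t)" ..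
qed

lemma cadlag_locally_bounded_at:
  assumes "cadlag f" "0 \<le> s"
  obtains \<delta> C where "0 < \<delta>" "\<And>u. 0 \<le> u \<Longrightarrow> \<bar>u - s\<bar> < \<delta> \<Longrightarrow> \<bar>f u\<bar> \<le> C"
proof -
  have "(f \<longlongrightarrow> f s) (at_right s)"
    using assms unfolding cadlag_def by (simp add: continuous_within)
  from tendstoD[OF this zero_less_one]
  have right: "\<forall>\<^sub>F u in at_right s. 0 \<le> u \<longrightarrow> \<bar>f u\<bar> \<le> \<bar>f s\<bar> + 1"
    by eventually_elim (auto simp: dist_real_def)
  obtain C where left: "\<forall>\<^sub>F u in at_left s. 0 \<le> u \<longrightarrow> \<bar>f u\<bar> \<le> C"
  proof (cases "s = 0")
    case True
    have "\<forall>\<^sub>F u in at_left s. \<not> 0 \<le> u"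
      unfolding True eventually_at_left_field by (auto intro: exI[of _ "-1"])
    then show ?thesis
      by (rule that[OF eventually_mono]) simp
  next
    case False
    then obtain l where "(f \<longlongrightarrow> l) (at_left s)"
      using assms unfolding cadlag_def by fastforce
    from tendstoD[OF this zero_less_one]
    have "\<forall>\<^sub>F u in at_left s. 0 \<le> u \<longrightarrow> \<bar>f u\<bar> \<le> \<bar>l\<bar> + 1"
      by eventually_elim (auto simp: dist_real_def)
    then show ?thesis by (rule that)
  qed
  have "\<forall>\<^sub>F u in at s. 0 \<le> u \<longrightarrow> \<bar>f u\<bar> \<le> max C (\<bar>f s\<bar> + 1)"
    using left right unfolding eventually_at_split by (auto elim: eventually_mono)
  then obtain \<delta> where "0 < \<delta>"
    and \<delta>: "\<And>u. u \<noteq> s \<Longrightarrow> dist u s < \<delta> \<Longrightarrow> 0 \<le> u \<Longrightarrow> \<bar>f u\<bar> \<le> max C (\<bar>f s\<bar> + 1)"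
    unfolding eventually_at by auto
  show ?thesis
  proof (rule that[OF \<open>0 < \<delta>\<close>])
    fix u assume "0 \<le> u" "\<bar>u - s\<bar> < \<delta>"
    then show "\<bar>f u\<bar> \<le> max C (\<bar>f s\<bar> + 1)"
      using \<delta>[of u] by (cases "u = s") (auto simp: dist_real_def)
  qed
qed

lemma cadlag_bounded_on_Icc:
  assumes "cadlag f"
  shows "\<exists>C. \<forall>s\<in>{0..T}. \<bar>f s\<bar> \<le> C"
proof -
  have "\<forall>s\<in>{0..T}. \<exists>\<delta> C. 0 < \<delta> \<and> (\<forall>u. 0 \<le> u \<longrightarrow> \<bar>u - s\<bar> < \<delta> \<longrightarrow> \<bar>f u\<bar> \<le> C)"
  proof
    fix s assume "s \<in> {0..T}"
    then obtain \<delta> C where "0 < \<delta>" "\<And>u. 0 \<le> u \<Longrightarrow> \<bar>u - s\<bar> < \<delta> \<Longrightarrow> \<bar>f u\<bar> \<le> C"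
      using cadlag_locally_bounded_at[OF assms] by auto
    then show "\<exists>\<delta> C. 0 < \<delta> \<and> (\<forall>u. 0 \<le> u \<longrightarrow> \<bar>u - s\<bar> < \<delta> \<longrightarrow> \<bar>f u\<bar> \<le> C)"
      by blast
  qed
  then obtain \<delta> C where \<delta>: "\<And>s. s \<in> {0..T} \<Longrightarrow> 0 < \<delta> s"
    and C: "\<And>s u. s \<in> {0..T} \<Longrightarrow> 0 \<le> u \<Longrightarrow> \<bar>u - s\<bar> < \<delta> s \<Longrightarrow> \<bar>f u\<bar> \<le> C s"
    by metis
  have cover: "{0..T} \<subseteq> (\<Union>s\<in>{0..T}. ball s (\<delta> s))"
    using \<delta> by force
  obtain D where D: "D \<subseteq> {0..T}" "finite D" "{0..T} \<subseteq> (\<Union>s\<in>D. ball s (\<delta> s))"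
    by (rule compactE_image[where S="{0..T}" and C="{0..T}" and f="\<lambda>s. ball s (\<delta> s)"])
      (use cover in auto)
  show ?thesis
  proof (intro exI ballI)
    fix u assume u: "u \<in> {0..T}"
    then obtain s where s: "s \<in> D" "u \<in> ball s (\<delta> s)"
      using D by blast
    have "\<bar>f u\<bar> \<le> C s"
      using s D u by (intro C) (auto simp: dist_real_def)
    also have "\<dots> \<le> \<bar>C s\<bar>"
      by simp
    also have "\<dots> \<le> (\<Sum>s\<in>D. \<bar>C s\<bar>)"
      using s D by (intro member_le_sum) auto
    finally show "\<bar>f u\<bar> \<le> (\<Sum>s\<in>D. \<bar>C s\<bar>)" .
  qed
qed

lemma continuous_at_right_cadlag_max0:
  assumes "cadlag f"
  shows "continuous (at_right s) (\<lambda>s. f (max 0 s))"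
proof (cases "s < 0")
  case True
  have "\<forall>\<^sub>F u in at_right s. f (max 0 u) = f 0"
    unfolding eventually_at_right_field using True by (intro exI[of _ 0]) auto
  then have "((\<lambda>s. f (max 0 s)) \<longlongrightarrow> f 0) (at_right s)"
    by (rule tendsto_eventually)
  then show ?thesis
    using True by (simp add: continuous_within)
next
  case False
  then have "(f \<longlongrightarrow> f s) (at_right s)"
    using assms unfolding cadlag_def by (simp add: continuous_within)
  moreover have "\<forall>\<^sub>F u in at_right s. f u = f (max 0 u)"
    unfolding eventually_at_right_field using False by (intro exI[of _ "s + 1"]) auto
  ultimately show ?thesis
    using False by (simp add: continuous_within Lim_transform_eventually)
qed

text \<open>A right-continuous function is the pointwise limit of the step functions obtained by
  evaluating it at the right end points of the grids of mesh \<open>1 / (k + 1)\<close>.\<close>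

lemma borel_measurable_right_continuous:
  fixes g :: "real \<Rightarrow> real"
  assumes "\<And>s. continuous (at_right s) g"
  shows "g \<in> borel_measurable borel"
proof (rule borel_measurable_LIMSEQ_real)
  define x where "x k s = (of_int \<lfloor>real (Suc k) * s\<rfloor> + 1) / real (Suc k)" for k s
  fix s :: real
  have above: "s < x k s" for k
  proof -
    have "real (Suc k) * s < of_int \<lfloor>real (Suc k) * s\<rfloor> + 1" by linarith
    then show ?thesis unfolding x_def by (simp add: field_simps)
  qed
  have below: "x k s \<le> s + inverse (real (Suc k))" for k
  proof -
    have "of_int \<lfloor>real (Suc k) * s\<rfloor> + 1 \<le> real (Suc k) * s + 1" by linarith
    then show ?thesis
      unfolding x_def by (simp add: field_simps del: of_nat_Suc)
  qed
  have "\<forall>\<^sub>F k in sequentially. s \<le> x k s"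
    by (intro always_eventually allI less_imp_le above)
  moreover have "\<forall>\<^sub>F k in sequentially. x k s \<le> s + inverse (real (Suc k))"
    by (intro always_eventually allI below)
  moreover have "(\<lambda>k. s + inverse (real (Suc k))) \<longlonglongrightarrow> s"
    using tendsto_add[OF tendsto_const LIMSEQ_inverse_real_of_nat, of s] by simp
  ultimately have "(\<lambda>k. x k s) \<longlonglongrightarrow> s"
    by (rule tendsto_sandwich[OF _ _ tendsto_const])
  then have "filterlim (\<lambda>k. x k s) (at_right s) sequentially"
    using above unfolding filterlim_at
    by (auto intro!: always_eventually simp: less_imp_neq[symmetric])
  moreover have "(g \<longlongrightarrow> g s) (at_right s)"
    using assms[of s] by (simp add: continuous_within)
  ultimately show "(\<lambda>k. g (x k s)) \<longlonglongrightarrow> g s"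
    by (rule filterlim_compose[rotated])
next
  fix k
  have "(\<lambda>s. \<lfloor>real (Suc k) * s\<rfloor>) \<in> measurable borel (count_space UNIV)"
    by (rule measurable_compose[OF _ measurable_real_floor]) simp
  then have "(\<lambda>s. (\<lambda>i::int. g ((of_int i + 1) / real (Suc k))) \<lfloor>real (Suc k) * s\<rfloor>) \<in> borel_measurable borel"
    by (rule measurable_compose_countable'[rotated]) simp_all
  then show "(\<lambda>s. g ((of_int \<lfloor>real (Suc k) * s\<rfloor> + 1) / real (Suc k))) \<in> borel_measurable borel"
    by simp
qed

lemma locally_bounded_const: "locally_bounded (\<lambda>_. c)"
  unfolding locally_bounded_def by auto

lemma locally_bounded_add:
  assumes "locally_bounded f" "locally_bounded g"
  shows "locally_bounded (\<lambda>s. f s + g s)"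
  unfolding locally_bounded_def
proof (intro allI impI)
  fix T :: real assume "0 \<le> T"
  then obtain C1 C2 where "\<forall>s\<in>{0..T}. \<bar>f s\<bar> \<le> C1" "\<forall>s\<in>{0..T}. \<bar>g s\<bar> \<le> C2"
    using assms unfolding locally_bounded_def by blast
  then have "\<forall>s\<in>{0..T}. \<bar>f s + g s\<bar> \<le> C1 + C2"
    by (auto intro: abs_triangle_ineq[THEN order_trans] add_mono)
  then show "\<exists>C. \<forall>s\<in>{0..T}. \<bar>f s + g s\<bar> \<le> C" ..
qed

lemma locally_bounded_mult:
  assumes "locally_bounded f" "locally_bounded g"
  shows "locally_bounded (\<lambda>s. f s * g s)"
  unfolding locally_bounded_def
proof (intro allI impI)
  fix T :: real assume "0 \<le> T"
  then obtain C1 C2 where C1: "\<forall>s\<in>{0..T}. \<bar>f s\<bar> \<le> C1" and C2: "\<forall>s\<in>{0..T}. \<bar>g s\<bar> \<le> C2"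
    using assms unfolding locally_bounded_def by blast
  have "0 \<le> C1"
    using C1 \<open>0 \<le> T\<close> by (meson abs_ge_zero atLeastAtMost_iff order.refl order_trans)
  then have "\<forall>s\<in>{0..T}. \<bar>f s * g s\<bar> \<le> C1 * C2"
    using C1 C2 by (auto simp: abs_mult intro: mult_mono)
  then show "\<exists>C. \<forall>s\<in>{0..T}. \<bar>f s * g s\<bar> \<le> C" ..
qed

lemma locally_bounded_sum:
  "(\<And>i. i \<in> S \<Longrightarrow> locally_bounded (f i)) \<Longrightarrow> locally_bounded (\<lambda>s. \<Sum>i\<in>S. f i s)"
  by (induction S rule: infinite_finite_induct) (auto intro: locally_bounded_add locally_bounded_const)

lemma locally_bounded_prod:
  "(\<And>i. i \<in> S \<Longrightarrow> locally_bounded (f i)) \<Longrightarrow> locally_bounded (\<lambda>s. \<Prod>i\<in>S. f i s)"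
  by (induction S rule: infinite_finite_induct) (auto intro: locally_bounded_mult locally_bounded_const)

lemma locally_bounded_power: "locally_bounded f \<Longrightarrow> locally_bounded (\<lambda>s. f s ^ k)"
  by (induction k) (auto intro: locally_bounded_mult locally_bounded_const)

lemma locally_bounded_cadlag_max0:
  assumes "cadlag f"
  shows "locally_bounded (\<lambda>s. f (max 0 s))"
  unfolding locally_bounded_def
proof (intro allI impI)
  fix T :: real
  obtain C where "\<forall>s\<in>{0..T}. \<bar>f s\<bar> \<le> C"
    using cadlag_bounded_on_Icc[OF assms] by blast
  then show "\<exists>C. \<forall>s\<in>{0..T}. \<bar>f (max 0 s)\<bar> \<le> C"
    by auto
qed

lemma lipschitz_on_set_integral:
  fixes g :: "real \<Rightarrow> real"
  assumes g: "g \<in> borel_measurable borel" and bound: "\<And>u. u \<in> {0..T} \<Longrightarrow> \<bar>g u\<bar> \<le> C"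
    and "0 \<le> T"
  shows "C-lipschitz_on {0..T} (\<lambda>t. LINT s:{0..t}|lborel. g s)"
proof (rule lipschitz_on_leI)
  show "0 \<le> C"
    using bound[of 0] \<open>0 \<le> T\<close> by auto
  have const_integrable: "set_integrable lborel A (\<lambda>_. c :: real)"
    if "A \<subseteq> {0..T}" "A \<in> sets borel" for A c
  proof -
    have "emeasure lborel A \<le> emeasure lborel {0..T}"
      using that by (intro emeasure_mono) auto
    also have "\<dots> < \<infinity>"
      using \<open>0 \<le> T\<close> by simp
    finally show ?thesis
      using that unfolding set_integrable_def
      by (intro integrable_scaleR_left integrable_indicator) auto
  qed
  have integrable: "set_integrable lborel A g" if "A \<subseteq> {0..T}" "A \<in> sets borel" for A
  proof (rule set_integrable_bound[OF const_integrable[OF that]])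
    show "set_borel_measurable lborel A g"
      using that g unfolding set_borel_measurable_def by measurable
    show "AE u in lborel. u \<in> A \<longrightarrow> norm (g u) \<le> norm C"
      using that bound \<open>0 \<le> C\<close> by (intro AE_I2) auto
  qed
  fix s t assume s: "s \<in> {0..T}" and t: "t \<in> {0..T}" and "s \<le> t"
  have "{0..t} = {0..s} \<union> {s<..t}"
    using s \<open>s \<le> t\<close> by auto
  then have split: "(LINT u:{0..t}|lborel. g u) = (LINT u:{0..s}|lborel. g u) + (LINT u:{s<..t}|lborel. g u)"
    using s t by (simp only:) (intro set_integral_Un integrable; auto)
  have g_bounds: "- C \<le> g u" "g u \<le> C" if "u \<in> {s<..t}" for u
    using bound[of u] that s t by auto
  have "(LINT u:{s<..t}|lborel. g u) \<le> (LINT u:{s<..t}|lborel. C)"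
    using s t g_bounds by (intro set_integral_mono integrable const_integrable) auto
  moreover have "(LINT u:{s<..t}|lborel. - C) \<le> (LINT u:{s<..t}|lborel. g u)"
    using s t g_bounds by (intro set_integral_mono integrable const_integrable) auto
  moreover have "(LINT u:{s<..t}|lborel. C) = C * (t - s)"
    using \<open>s \<le> t\<close> by (subst set_integral_const) auto
  moreover have "(LINT u:{s<..t}|lborel. - C) = - C * (t - s)"
    using \<open>s \<le> t\<close> by (subst set_integral_const) auto
  ultimately have "\<bar>LINT u:{s<..t}|lborel. g u\<bar> \<le> C * (t - s)"
    by (simp add: abs_le_iff)
  moreover have "dist (LINT u:{0..s}|lborel. g u) (LINT u:{0..t}|lborel. g u) = \<bar>LINT u:{s<..t}|lborel. g u\<bar>"
    unfolding split dist_real_def by simp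
  ultimately show "dist (LINT u:{0..s}|lborel. g u) (LINT u:{0..t}|lborel. g u) \<le> C * dist s t"
    using \<open>s \<le> t\<close> by (simp add: dist_real_def)
qed

lemma bounded_variation_on_lipschitz:
  assumes "C-lipschitz_on {a..b} f"
  shows "bounded_variation_on a b f"
  unfolding bounded_variation_on_def
proof (intro exI allI impI)
  fix p :: "nat \<Rightarrow> real" and N
  assume p: "p 0 = a" "p N = b" "\<forall>k<N. p k \<le> p (Suc k)"
  have p_mono: "p i \<le> p j" if "i \<le> j" "j \<le> N" for i j
    by (rule lift_Suc_mono_le_ivl[where N="{..<N}"]) (use p(3) that in auto)
  have "(\<Sum>k<N. \<bar>f (p (Suc k)) - f (p k)\<bar>) \<le> (\<Sum>k<N. C * (p (Suc k) - p k))"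
  proof (rule sum_mono)
    fix k assume "k \<in> {..<N}"
    then have "a \<le> p k" "p k \<le> p (Suc k)" "p (Suc k) \<le> b"
      using p_mono[of 0 k] p_mono[of k "Suc k"] p_mono[of "Suc k" N] p(1,2) by auto
    then have "p (Suc k) \<in> {a..b}" "p k \<in> {a..b}" "p k \<le> p (Suc k)"
      by auto
    then show "\<bar>f (p (Suc k)) - f (p k)\<bar> \<le> C * (p (Suc k) - p k)"
      using lipschitz_onD[OF assms, of "p (Suc k)" "p k"] by (simp add: dist_real_def)
  qed
  also have "\<dots> = C * (\<Sum>k<N. p (Suc k) - p k)"
    by (rule sum_distrib_left[symmetric])
  also have "\<dots> = C * (b - a)"
    using p by (simp only: sum_lessThan_telescope)
  finally show "(\<Sum>k<N. \<bar>f (p (Suc k)) - f (p k)\<bar>) \<le> C * (b - a)" .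
qed

lemma set_integral_lborel_singleton: "(LINT s:{a::real}|lborel. f s) = 0"
  unfolding set_lebesgue_integral_def
  by (rule integral_eq_zero_AE) (use AE_lborel_singleton[of a] in \<open>auto elim!: eventually_mono\<close>)

section \<open>Martingales and semimartingales\<close>

lemma rc_filtration_prob_space: "rc_filtration M F \<Longrightarrow> prob_space M"
  unfolding rc_filtration_def by blast

lemma rc_filtration_sigma_finite_subalgebra:
  assumes "rc_filtration M F" "0 \<le> s"
  shows "sigma_finite_subalgebra M (F s)"
proof -
  have "subalgebra M (F s)" "finite_measure M"
    using assms unfolding rc_filtration_def by (auto intro: prob_space.finite_measure)
  then have "finite_measure_subalgebra M (F s)"
    unfolding finite_measure_subalgebra_def finite_measure_subalgebra_axioms_def by blast
  then show ?thesis
    by (rule finite_measure_subalgebra_is_sigma_finite)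
qed

lemma rc_filtration_measurable_mono:
  assumes "rc_filtration M F" "0 \<le> s" "s \<le> t" "f \<in> borel_measurable (F s)"
  shows "f \<in> borel_measurable (F t)"
proof -
  have "0 \<le> t"
    using assms(2,3) by linarith
  then have "subalgebra M (F s)" "subalgebra M (F t)" "sets (F s) \<subseteq> sets (F t)"
    using assms unfolding rc_filtration_def by blast+
  then have "subalgebra (F t) (F s)"
    unfolding subalgebra_def by simp
  then show ?thesis
    using assms(4) by (rule measurable_from_subalg)
qed

lemma martingale_zero:
  assumes "rc_filtration M F"
  shows "martingale M F (\<lambda>t \<omega>. 0)"
  unfolding martingale_def adapted_def
proof (intro conjI allI impI)
  fix s t :: real assume "0 \<le> s" "s \<le> t"
  interpret sigma_finite_subalgebra M "F s"
    using rc_filtration_sigma_finite_subalgebra[OF assms \<open>0 \<le> s\<close>] .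
  show "AE \<omega> in M. real_cond_exp M (F s) (\<lambda>\<omega>. 0) \<omega> = 0"
    by (rule real_cond_exp_F_meas) auto
qed auto

lemma martingale_stopped_at_const:
  assumes rc: "rc_filtration M F" and L: "martingale M F L" and "0 \<le> c"
  shows "martingale M F (\<lambda>t \<omega>. L (min t c) \<omega>)"
  unfolding martingale_def adapted_def
proof (intro conjI allI impI)
  fix t :: real assume "0 \<le> t"
  then have "0 \<le> min t c"
    using \<open>0 \<le> c\<close> by simp
  then have "L (min t c) \<in> borel_measurable (F (min t c))" "integrable M (L (min t c))"
    using L unfolding martingale_def adapted_def by blast+
  then show "L (min t c) \<in> borel_measurable (F t)" "integrable M (L (min t c))"
    using rc_filtration_measurable_mono[OF rc \<open>0 \<le> min t c\<close> min.cobounded1] by blast+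
next
  fix s t :: real assume "0 \<le> s" "s \<le> t"
  show "AE \<omega> in M. real_cond_exp M (F s) (L (min t c)) \<omega> = L (min s c) \<omega>"
  proof (cases "s \<le> c")
    case True
    then have "min s c = s" "s \<le> min t c"
      using \<open>s \<le> t\<close> by auto
    moreover have "AE \<omega> in M. real_cond_exp M (F s) (L (min t c)) \<omega> = L s \<omega>"
      using L \<open>0 \<le> s\<close> \<open>s \<le> min t c\<close> unfolding martingale_def by blast
    ultimately show ?thesis
      by simp
  next
    case False
    then have "min s c = c" "min t c = c"
      using \<open>s \<le> t\<close> by auto
    interpret sigma_finite_subalgebra M "F s"
      using rc_filtration_sigma_finite_subalgebra[OF rc \<open>0 \<le> s\<close>] .
    have "L c \<in> borel_measurable (F c)" "integrable M (L c)"
      using L \<open>0 \<le> c\<close> unfolding martingale_def adapted_def by blast+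
    then have "L c \<in> borel_measurable (F s)"
      using False rc_filtration_measurable_mono[OF rc \<open>0 \<le> c\<close>, of s] by simp
    then show ?thesis
      unfolding \<open>min s c = c\<close> \<open>min t c = c\<close>
      by (rule real_cond_exp_F_meas[OF \<open>integrable M (L c)\<close>])
  qed
qed

lemma local_martingale_if_martingale:
  assumes rc: "rc_filtration M F" and L: "martingale M F L"
  shows "local_martingale M F L"
  unfolding local_martingale_def
proof (intro exI[of _ "\<lambda>k \<omega>. real k"] conjI allI)
  fix k
  show "stopping_time_on M F (\<lambda>\<omega>. real k)"
    unfolding stopping_time_on_def
  proof (intro conjI allI impI ballI)
    fix t :: real assume "0 \<le> t"
    then have "space M \<in> sets (F t)"
      using rc unfolding rc_filtration_def subalgebra_def by (metis sets.top)
    then show "{\<omega> \<in> space M. real k \<le> t} \<in> sets (F t)"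
      by (cases "real k \<le> t") auto
  qed simp
  show "martingale M F (\<lambda>t \<omega>. L (min t (real k)) \<omega>)"
    using martingale_stopped_at_const[OF rc L] by simp
qed (auto simp: mono_def filterlim_real_sequentially)

text \<open>The integrated drift is pathwise locally Lipschitz, hence cadlag of finite variation. The drift
  only needs to agree with a measurable locally bounded function on \<open>[0, \<infinity>)\<close>, because paths
  are only controlled there.\<close>

lemma semimartingale_if_martingale_drift:
  fixes Y g :: "real \<Rightarrow> 'a \<Rightarrow> real"
  assumes rc: "rc_filtration M F" and Y: "adapted M F Y" "\<And>\<omega>. \<omega> \<in> space M \<Longrightarrow> cadlag (\<lambda>t. Y t \<omega>)"
    and mart: "martingale M F (\<lambda>t \<omega>. Y t \<omega> - Y 0 \<omega> - (LINT s:{0..t}|lborel. g s \<omega>))"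
    and drift: "\<And>\<omega>. \<omega> \<in> space M \<Longrightarrow>
      \<exists>h. h \<in> borel_measurable borel \<and> locally_bounded h \<and> (\<forall>s\<ge>0. h s = g s \<omega>)"
  shows "semimartingale M F Y"
proof -
  define A where "A t \<omega> = (LINT s:{0..t}|lborel. g s \<omega>)" for t \<omega>
  define L where "L t \<omega> = Y t \<omega> - Y 0 \<omega> - A t \<omega>" for t \<omega>
  have lipschitz: "\<exists>C. C-lipschitz_on {0..T} (\<lambda>t. A t \<omega>)" if "\<omega> \<in> space M" "0 \<le> T" for \<omega> T
  proof -
    obtain h where h: "h \<in> borel_measurable borel" "locally_bounded h" "\<And>s. 0 \<le> s \<Longrightarrow> h s = g s \<omega>"
      using drift[OF \<open>\<omega> \<in> space M\<close>] by blast
    obtain C where "\<forall>s\<in>{0..T}. \<bar>h s\<bar> \<le> C"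
      using h(2) \<open>0 \<le> T\<close> unfolding locally_bounded_def by blast
    then have "C-lipschitz_on {0..T} (\<lambda>t. LINT s:{0..t}|lborel. h s)"
      using h(1) \<open>0 \<le> T\<close> by (intro lipschitz_on_set_integral) auto
    moreover have "(\<lambda>t. LINT s:{0..t}|lborel. h s) = (\<lambda>t. A t \<omega>)"
      unfolding A_def by (intro ext set_lebesgue_integral_cong) (auto simp: h(3))
    ultimately show ?thesis
      by metis
  qed
  have "adapted M F A"
    unfolding adapted_def
  proof (intro allI impI)
    fix t :: real assume "0 \<le> t"
    then have "Y t \<in> borel_measurable (F t)" "Y 0 \<in> borel_measurable (F t)" "L t \<in> borel_measurable (F t)"
      using Y(1) mart rc_filtration_measurable_mono[OF rc order_refl \<open>0 \<le> t\<close>, of "Y 0"]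
      unfolding adapted_def martingale_def L_def A_def by auto
    moreover have "A t = (\<lambda>\<omega>. Y t \<omega> - Y 0 \<omega> - L t \<omega>)"
      unfolding L_def by auto
    ultimately show "A t \<in> borel_measurable (F t)"
      by simp
  qed
  moreover have "local_martingale M F L"
    using local_martingale_if_martingale[OF rc mart] unfolding L_def A_def .
  moreover have "cadlag (\<lambda>t. A t \<omega>)" if "\<omega> \<in> space M" for \<omega>
    by (rule cadlag_if_continuous_on) (use lipschitz[OF that] lipschitz_on_continuous_on in blast)
  moreover have "bounded_variation_on 0 t (\<lambda>s. A s \<omega>)" if "\<omega> \<in> space M" "0 \<le> t" for \<omega> t
    using lipschitz[OF that] bounded_variation_on_lipschitz by blast
  moreover have "L 0 \<omega> = 0" "A 0 \<omega> = 0" for \<omega>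
    unfolding L_def A_def by (simp_all add: set_integral_lborel_singleton)
  moreover have "\<forall>t\<ge>0. \<forall>\<omega>\<in>space M. Y t \<omega> = Y 0 \<omega> + L t \<omega> + A t \<omega>"
    unfolding L_def by simp
  ultimately show ?thesis
    using Y unfolding semimartingale_def by blast
qed

lemma finite_multi_le:
  assumes "finite I"
  shows "finite (multi_le I m)"
proof (rule finite_subset)
  show "multi_le I m \<subseteq> {l. \<forall>i. (i \<in> I \<longrightarrow> l i \<in> {..m}) \<and> (i \<notin> I \<longrightarrow> l i = 0)}"
    using assms unfolding multi_le_def by (auto intro: order_trans[OF member_le_sum])
  show "finite {l. \<forall>i. (i \<in> I \<longrightarrow> l i \<in> {..m}) \<and> (i \<notin> I \<longrightarrow> l i = (0::nat))}"
    using assms by (intro finite_set_of_finite_funs) auto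
qed

lemma zero_in_multi_le [simp]: "(\<lambda>_. 0) \<in> multi_le I m"
  unfolding multi_le_def by auto

lemma multi_le_mono: "m \<le> m' \<Longrightarrow> multi_le I m \<subseteq> multi_le I m'"
  unfolding multi_le_def by auto

lemma deg_le_if_in_multi_le: "l \<in> multi_le I m \<Longrightarrow> deg I l \<le> m"
  unfolding multi_le_def deg_def by auto

lemma in_multi_le_deg: "l \<in> multi_le I m \<Longrightarrow> l \<in> multi_le I (deg I l)"
  unfolding multi_le_def deg_def by auto

lemma deg_pos_if_nonzero:
  assumes "finite I" "l \<in> multi_le I m" "l \<noteq> (\<lambda>_. 0)"
  shows "0 < deg I l"
proof -
  obtain i where "l i \<noteq> 0"
    using assms(3) by auto
  moreover from this have "i \<in> I"
    using assms(2) unfolding multi_le_def by auto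
  ultimately show ?thesis
    using assms(1) unfolding deg_def by (metis gr0I sum_eq_0_iff)
qed

lemma mpow_zero [simp]: "mpow I (\<lambda>_. 0) x = 1"
  unfolding mpow_def by simp

definition power_index :: "'i \<Rightarrow> nat \<Rightarrow> 'i \<Rightarrow> nat" where
  "power_index i n = (\<lambda>j. if j = i then n else 0)"

lemma power_index_in_multi_le: "i \<in> I \<Longrightarrow> power_index i n \<in> multi_le I n"
  unfolding multi_le_def power_index_def by (cases "finite I") (auto simp: sum.delta)

lemma deg_power_index: "finite I \<Longrightarrow> i \<in> I \<Longrightarrow> deg I (power_index i n) = n"
  unfolding deg_def power_index_def by (simp add: sum.delta)

lemma mpow_power_index: "finite I \<Longrightarrow> i \<in> I \<Longrightarrow> mpow I (power_index i n) x = x i ^ n"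
  unfolding mpow_def power_index_def by (simp add: prod.delta if_distrib[of "\<lambda>k. _ ^ k"] cong: if_cong)

lemma power_index_eq_zero_iff: "power_index i n = (\<lambda>_. 0) \<longleftrightarrow> n = 0"
  unfolding power_index_def by (metis (full_types))

lemma multi_le_one:
  assumes "finite I"
  shows "multi_le I 1 = insert (\<lambda>_. 0) ((\<lambda>i. power_index i 1) ` I)"
proof (intro equalityI subsetI)
  fix l assume l: "l \<in> multi_le I 1"
  show "l \<in> insert (\<lambda>_. 0) ((\<lambda>i. power_index i 1) ` I)"
  proof (cases "l = (\<lambda>_. 0)")
    case False
    then obtain i where i: "i \<in> I" "l i \<noteq> 0"
      using l unfolding multi_le_def by auto
    have "l j + l i \<le> 1" if "j \<in> I" "j \<noteq> i" for j
      using l that i sum_mono2[OF assms, of "{i, j}" l] unfolding multi_le_def by auto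
    moreover have "l i \<le> 1"
      using l i assms member_le_sum[of i I l] unfolding multi_le_def by auto
    ultimately have "l = power_index i 1"
      using l i unfolding multi_le_def power_index_def by fastforce
    then show ?thesis
      using i by blast
  qed simp
qed (use power_index_in_multi_le in auto)

lemma vnorm_nonneg: "0 \<le> vnorm I x"
  unfolding vnorm_def by (simp add: sum_nonneg)

lemma vnorm_eq_L2_set: "vnorm I x = L2_set x I"
  unfolding vnorm_def L2_set_def ..

lemma abs_le_vnorm:
  assumes "finite I" "i \<in> I"
  shows "\<bar>x i\<bar> \<le> vnorm I x"
proof -
  have "\<bar>x i\<bar> \<le> L2_set (\<lambda>i. \<bar>x i\<bar>) I"
    using assms by (rule member_le_L2_set)
  also have "\<dots> = vnorm I x"
    unfolding vnorm_eq_L2_set L2_set_def by simp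
  finally show ?thesis .
qed

lemma vnorm_le_card_mult:
  assumes "finite J" "\<And>j. j \<in> J \<Longrightarrow> \<bar>z j\<bar> \<le> B"
  shows "vnorm J z \<le> real (card J) * B"
proof -
  have "vnorm J z \<le> (\<Sum>j\<in>J. \<bar>z j\<bar>)"
    unfolding vnorm_eq_L2_set by (rule L2_set_le_sum_abs)
  also have "\<dots> \<le> real (card J) * B"
    using assms(2) by (rule sum_bounded_above)
  finally show ?thesis .
qed

lemma abs_mpow_le:
  assumes "finite I" "deg I l \<le> n"
  shows "\<bar>mpow I l x\<bar> \<le> 1 + vnorm I x ^ n"
proof -
  have "\<bar>mpow I l x\<bar> = (\<Prod>i\<in>I. \<bar>x i\<bar> ^ l i)"
    unfolding mpow_def by (simp add: abs_prod power_abs)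
  also have "\<dots> \<le> (\<Prod>i\<in>I. vnorm I x ^ l i)"
    using assms(1) by (intro prod_mono conjI power_mono abs_le_vnorm) auto
  also have "\<dots> = vnorm I x ^ deg I l"
    unfolding deg_def by (simp add: power_sum)
  also have "\<dots> \<le> 1 + vnorm I x ^ n"
  proof (cases "vnorm I x \<le> 1")
    case True
    then show ?thesis
      using vnorm_nonneg[of I x] by (simp add: add_increasing2 power_le_one)
  next
    case False
    then show ?thesis
      using assms(2) by (simp add: add_increasing power_increasing)
  qed
  finally show ?thesis .
qed

lemma vnorm_power_le_max_coordinate:
  assumes "finite I" "I \<noteq> {}"
  obtains i where "i \<in> I" "vnorm I x ^ n \<le> real (card I) ^ n * \<bar>x i\<bar> ^ n"
proof -
  have "Max ((\<lambda>j. \<bar>x j\<bar>) ` I) \<in> (\<lambda>j. \<bar>x j\<bar>) ` I"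
    using assms by (intro Max_in) auto
  then obtain i where i: "i \<in> I" "\<bar>x i\<bar> = Max ((\<lambda>j. \<bar>x j\<bar>) ` I)"
    by auto
  then have i_max: "\<bar>x j\<bar> \<le> \<bar>x i\<bar>" if "j \<in> I" for j
    using assms that by simp
  have "vnorm I x \<le> real (card I) * \<bar>x i\<bar>"
    using assms(1) i_max by (rule vnorm_le_card_mult)
  then have "vnorm I x ^ n \<le> (real (card I) * \<bar>x i\<bar>) ^ n"
    using vnorm_nonneg by (intro power_mono) auto
  then show ?thesis
    using that[OF \<open>i \<in> I\<close>] by (simp add: power_mult_distrib)
qed

section \<open>Drifts of monomials\<close>

definition monomial_drift_in ::
  "'a measure \<Rightarrow> (real \<Rightarrow> 'a measure) \<Rightarrow> 'i set \<Rightarrow> (real \<Rightarrow> 'a \<Rightarrow> 'i \<Rightarrow> real) \<Rightarrow>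
    ('i \<Rightarrow> nat) \<Rightarrow> ('i \<Rightarrow> nat) set \<Rightarrow> bool" where
  "monomial_drift_in M F I X l K \<longleftrightarrow>
     (\<exists>b :: ('i \<Rightarrow> nat) \<Rightarrow> real \<Rightarrow> real.
        (\<forall>\<mu>\<in>K. b \<mu> \<in> borel_measurable borel \<and> locally_bounded (b \<mu>)) \<and>
        martingale M F (\<lambda>t \<omega>. mpow I l (X t \<omega>) - mpow I l (X 0 \<omega>)
            - (LINT s:{0..t}|lborel. (\<Sum>\<mu>\<in>K. b \<mu> s * mpow I \<mu> (X s \<omega>)))))"

lemma polynomial_process_iff:
  "polynomial_process M F I n X \<longleftrightarrow>
     vsemimartingale M F I X \<and> finite_time_moment M (\<lambda>s \<omega>. vnorm I (X s \<omega>) ^ n) \<and>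
     (\<forall>l\<in>multi_le I n. monomial_drift_in M F I X l (multi_le I (deg I l)))"
  unfolding polynomial_process_def finite_time_moment_def monomial_drift_in_def ..

definition affine_drift ::
  "'a measure \<Rightarrow> (real \<Rightarrow> 'a measure) \<Rightarrow> 'j set \<Rightarrow> (real \<Rightarrow> 'a \<Rightarrow> 'j \<Rightarrow> real) \<Rightarrow> 'j \<Rightarrow> bool" where
  "affine_drift M F J Z j \<longleftrightarrow>
     (\<exists>a c. a \<in> borel_measurable borel \<and> locally_bounded a \<and>
        (\<forall>k\<in>J. c k \<in> borel_measurable borel \<and> locally_bounded (c k)) \<and>
        martingale M F (\<lambda>t \<omega>. Z t \<omega> j - Z 0 \<omega> j
           - (LINT s:{0..t}|lborel. a s + (\<Sum>k\<in>J. c k s * Z s \<omega> k))))"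

lemma monomial_drift_in_zero:
  assumes "rc_filtration M F"
  shows "monomial_drift_in M F I X (\<lambda>_. 0) K"
  unfolding monomial_drift_in_def
  by (rule exI[of _ "\<lambda>_ _. 0"]) (simp add: locally_bounded_const martingale_zero[OF assms])

text \<open>The two directions below translate between drifts written in the monomials \<open>x\<^sup>\<mu>\<close>,
  \<open>\<mu> \<in> K\<close>, and affine drifts in coordinates \<open>Z\<^sub>k = x\<^bsup>\<phi> k\<^esup>\<close>: coefficients of coordinates with the
  same monomial are added up, and conversely each monomial gets the coefficient of one chosen
  coordinate.\<close>

lemma monomial_drift_if_affine_drift:
  fixes X :: "real \<Rightarrow> 'a \<Rightarrow> 'i \<Rightarrow> real" and \<phi> :: "'j \<Rightarrow> 'i \<Rightarrow> nat"
  assumes J: "finite J" and K: "finite K" "(\<lambda>_. 0) \<in> K" "\<phi> ` J \<subseteq> K"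
    and Z: "\<And>t \<omega> k. k \<in> J \<Longrightarrow> Z t \<omega> k = mpow I (\<phi> k) (X t \<omega>)"
    and "j \<in> J" and drift: "affine_drift M F J Z j"
  shows "monomial_drift_in M F I X (\<phi> j) K"
proof -
  obtain a c where a: "a \<in> borel_measurable borel" "locally_bounded a"
    and c: "\<And>k. k \<in> J \<Longrightarrow> c k \<in> borel_measurable borel \<and> locally_bounded (c k)"
    and mart: "martingale M F (\<lambda>t \<omega>. Z t \<omega> j - Z 0 \<omega> j
           - (LINT s:{0..t}|lborel. a s + (\<Sum>k\<in>J. c k s * Z s \<omega> k)))"
    using drift unfolding affine_drift_def by blast
  define b where "b \<mu> s = (if \<mu> = (\<lambda>_. 0) then a s else 0) + (\<Sum>k\<in>{k\<in>J. \<phi> k = \<mu>}. c k s)" for \<mu> s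
  have sum_eq: "(\<Sum>\<mu>\<in>K. b \<mu> s * mpow I \<mu> x) = a s + (\<Sum>k\<in>J. c k s * mpow I (\<phi> k) x)" for s x
  proof -
    have "b \<mu> s * mpow I \<mu> x
        = (if \<mu> = (\<lambda>_. 0) then a s else 0) + (\<Sum>k\<in>{k\<in>J. \<phi> k = \<mu>}. c k s * mpow I (\<phi> k) x)" for \<mu>
      unfolding b_def by (simp add: distrib_right sum_distrib_right)
    then have "(\<Sum>\<mu>\<in>K. b \<mu> s * mpow I \<mu> x)
        = (\<Sum>\<mu>\<in>K. if \<mu> = (\<lambda>_. 0) then a s else 0) + (\<Sum>\<mu>\<in>K. \<Sum>k\<in>{k\<in>J. \<phi> k = \<mu>}. c k s * mpow I (\<phi> k) x)"
      by (simp add: sum.distrib)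
    also have "(\<Sum>\<mu>\<in>K. if \<mu> = (\<lambda>_. 0) then a s else 0) = a s"
      using K by (simp add: sum.delta)
    also have "(\<Sum>\<mu>\<in>K. \<Sum>k\<in>{k\<in>J. \<phi> k = \<mu>}. c k s * mpow I (\<phi> k) x) = (\<Sum>k\<in>J. c k s * mpow I (\<phi> k) x)"
      using J K by (intro sum.group) auto
    finally show ?thesis .
  qed
  moreover have "\<forall>\<mu>\<in>K. b \<mu> \<in> borel_measurable borel \<and> locally_bounded (b \<mu>)"
  proof
    fix \<mu> :: "'i \<Rightarrow> nat"
    have "(\<lambda>s. if \<mu> = (\<lambda>_. 0) then a s else 0) \<in> borel_measurable borel"
      "locally_bounded (\<lambda>s. if \<mu> = (\<lambda>_. 0) then a s else 0)"
      using a by (cases "\<mu> = (\<lambda>_. 0)"; simp add: locally_bounded_const)+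
    then show "b \<mu> \<in> borel_measurable borel \<and> locally_bounded (b \<mu>)"
      using c unfolding b_def
      by (auto intro!: borel_measurable_add borel_measurable_sum locally_bounded_add locally_bounded_sum)
  qed
  moreover have "martingale M F (\<lambda>t \<omega>. mpow I (\<phi> j) (X t \<omega>) - mpow I (\<phi> j) (X 0 \<omega>)
      - (LINT s:{0..t}|lborel. (\<Sum>\<mu>\<in>K. b \<mu> s * mpow I \<mu> (X s \<omega>))))"
    using mart \<open>j \<in> J\<close> by (simp add: sum_eq Z cong: sum.cong)
  ultimately show ?thesis
    unfolding monomial_drift_in_def by blast
qed

lemma affine_drift_if_monomial_drift:
  fixes X :: "real \<Rightarrow> 'a \<Rightarrow> 'i \<Rightarrow> real" and \<phi> :: "'j \<Rightarrow> 'i \<Rightarrow> nat"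
  assumes J: "finite J" and D: "finite D" "(\<lambda>_. 0) \<in> D" "D \<subseteq> insert (\<lambda>_. 0) (\<phi> ` J)"
    and Z: "\<And>t \<omega> k. k \<in> J \<Longrightarrow> Z t \<omega> k = mpow I (\<phi> k) (X t \<omega>)"
    and "j \<in> J" and drift: "monomial_drift_in M F I X (\<phi> j) D"
  shows "affine_drift M F J Z j"
proof -
  obtain b where b: "\<And>\<mu>. \<mu> \<in> D \<Longrightarrow> b \<mu> \<in> borel_measurable borel \<and> locally_bounded (b \<mu>)"
    and mart: "martingale M F (\<lambda>t \<omega>. mpow I (\<phi> j) (X t \<omega>) - mpow I (\<phi> j) (X 0 \<omega>)
            - (LINT s:{0..t}|lborel. (\<Sum>\<mu>\<in>D. b \<mu> s * mpow I \<mu> (X s \<omega>))))"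
    using drift unfolding monomial_drift_in_def by blast
  define D' where "D' = D - {\<lambda>_. 0}"
  define \<psi> where "\<psi> \<mu> = (SOME k. k \<in> J \<and> \<phi> k = \<mu>)" for \<mu>
  have \<psi>: "\<psi> \<mu> \<in> J" "\<phi> (\<psi> \<mu>) = \<mu>" if "\<mu> \<in> D'" for \<mu>
    using that D(3) someI_ex[of "\<lambda>k. k \<in> J \<and> \<phi> k = \<mu>"] unfolding D'_def \<psi>_def by blast+
  then have inj: "inj_on \<psi> D'"
    by (metis inj_onI)
  define c where "c k s = (if k \<in> \<psi> ` D' then b (\<phi> k) s else 0)" for k s
  have "(\<Sum>\<mu>\<in>D. b \<mu> s * mpow I \<mu> x) = b (\<lambda>_. 0) s + (\<Sum>k\<in>J. c k s * mpow I (\<phi> k) x)" for s x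
  proof -
    have "(\<Sum>k\<in>J. c k s * mpow I (\<phi> k) x) = (\<Sum>k\<in>J. if k \<in> \<psi> ` D' then b (\<phi> k) s * mpow I (\<phi> k) x else 0)"
      unfolding c_def by (intro sum.cong) auto
    also have "\<dots> = (\<Sum>k\<in>J \<inter> \<psi> ` D'. b (\<phi> k) s * mpow I (\<phi> k) x)"
      using J by (rule sum.inter_restrict[symmetric])
    also have "\<dots> = (\<Sum>k\<in>\<psi> ` D'. b (\<phi> k) s * mpow I (\<phi> k) x)"
      using \<psi> by (simp add: Int_absorb1 image_subset_iff)
    also have "\<dots> = (\<Sum>\<mu>\<in>D'. b \<mu> s * mpow I \<mu> x)"
      using inj \<psi> by (simp add: sum.reindex)
    finally show ?thesis
      using D unfolding D'_def by (simp add: sum.remove)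
  qed
  moreover have "\<forall>k\<in>J. c k \<in> borel_measurable borel \<and> locally_bounded (c k)"
  proof
    fix k assume "k \<in> J"
    show "c k \<in> borel_measurable borel \<and> locally_bounded (c k)"
    proof (cases "k \<in> \<psi> ` D'")
      case True
      then obtain \<mu> where "\<mu> \<in> D'" "k = \<psi> \<mu>"
        by blast
      then have "\<phi> k \<in> D"
        using \<psi> unfolding D'_def by simp
      then show ?thesis
        using True b unfolding c_def by simp
    qed (unfold c_def, simp add: locally_bounded_const)
  qed
  ultimately show ?thesis
    using mart b[OF D(2)] \<open>j \<in> J\<close> unfolding affine_drift_def by (auto simp: Z cong: sum.cong)
qed

lemma polynomial_process_one_iff:
  fixes Z :: "real \<Rightarrow> 'a \<Rightarrow> 'j \<Rightarrow> real"
  assumes rc: "rc_filtration M F" and J: "finite J"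
  shows "polynomial_process M F J 1 Z \<longleftrightarrow>
    vsemimartingale M F J Z \<and> finite_time_moment M (\<lambda>s \<omega>. vnorm J (Z s \<omega>)) \<and>
    (\<forall>j\<in>J. affine_drift M F J Z j)"
proof -
  let ?e = "\<lambda>j. power_index j 1"
  have ones: "multi_le J 1 = insert (\<lambda>_. 0) (?e ` J)"
    using J by (rule multi_le_one)
  have coordinates: "Z t \<omega> k = mpow J (?e k) (Z t \<omega>)" if "k \<in> J" for t \<omega> k
    using J that by (simp add: mpow_power_index)
  have key: "monomial_drift_in M F J Z (?e j) (multi_le J (deg J (?e j))) \<longleftrightarrow> affine_drift M F J Z j"
    if "j \<in> J" for j
    unfolding deg_power_index[OF J that]
  proof
    assume "affine_drift M F J Z j"
    then show "monomial_drift_in M F J Z (?e j) (multi_le J 1)"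
      using J that coordinates
      by (intro monomial_drift_if_affine_drift[where I=J and X=Z and \<phi>="?e"]) (auto simp: ones finite_multi_le power_index_in_multi_le)
  next
    assume "monomial_drift_in M F J Z (?e j) (multi_le J 1)"
    then show "affine_drift M F J Z j"
      using J that coordinates equalityD1[OF ones]
      by (intro affine_drift_if_monomial_drift[where I=J and X=Z and \<phi>="?e" and D="multi_le J 1"])
        (auto simp: finite_multi_le)
  qed
  have "(\<forall>l\<in>multi_le J 1. monomial_drift_in M F J Z l (multi_le J (deg J l)))
      \<longleftrightarrow> (\<forall>j\<in>J. affine_drift M F J Z j)"
    using key monomial_drift_in_zero[OF rc] unfolding ones by blast
  then show ?thesis
    by (simp add: polynomial_process_iff)
qed

lemma semimartingale_monomial:
  fixes X :: "real \<Rightarrow> 'a \<Rightarrow> 'i \<Rightarrow> real"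
  assumes rc: "rc_filtration M F" and X: "vsemimartingale M F I X" and "finite I"
    and drift: "monomial_drift_in M F I X l K"
  shows "semimartingale M F (\<lambda>t \<omega>. mpow I l (X t \<omega>))"
proof -
  obtain b where b: "\<And>\<mu>. \<mu> \<in> K \<Longrightarrow> b \<mu> \<in> borel_measurable borel \<and> locally_bounded (b \<mu>)"
    and mart: "martingale M F (\<lambda>t \<omega>. mpow I l (X t \<omega>) - mpow I l (X 0 \<omega>)
            - (LINT s:{0..t}|lborel. (\<Sum>\<mu>\<in>K. b \<mu> s * mpow I \<mu> (X s \<omega>))))"
    using drift unfolding monomial_drift_in_def by blast
  have coordinate: "adapted M F (\<lambda>t \<omega>. X t \<omega> i)" "\<And>\<omega>. \<omega> \<in> space M \<Longrightarrow> cadlag (\<lambda>t. X t \<omega> i)"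
    if "i \<in> I" for i
    using X that unfolding vsemimartingale_def semimartingale_def by blast+
  show ?thesis
  proof (rule semimartingale_if_martingale_drift[OF rc _ _ mart])
    show "adapted M F (\<lambda>t \<omega>. mpow I l (X t \<omega>))"
      using coordinate(1) unfolding adapted_def mpow_def
      by (auto intro!: borel_measurable_prod borel_measurable_power)
    fix \<omega> assume "\<omega> \<in> space M"
    then have cadlag: "cadlag (\<lambda>t. X t \<omega> i)" if "i \<in> I" for i
      using coordinate(2) that by blast
    then show "cadlag (\<lambda>t. mpow I l (X t \<omega>))"
      unfolding mpow_def by (intro cadlag_prod cadlag_power)
    let ?h = "\<lambda>s. \<Sum>\<mu>\<in>K. b \<mu> s * (\<Prod>i\<in>I. X (max 0 s) \<omega> i ^ \<mu> i)"
    have "(\<lambda>s. X (max 0 s) \<omega> i) \<in> borel_measurable borel" if "i \<in> I" for i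
      using cadlag[OF that] by (intro borel_measurable_right_continuous continuous_at_right_cadlag_max0)
    then have "?h \<in> borel_measurable borel"
      using b by (intro borel_measurable_sum borel_measurable_times borel_measurable_prod
          borel_measurable_power) auto
    moreover have "locally_bounded ?h"
      using b cadlag
      by (intro locally_bounded_sum locally_bounded_mult locally_bounded_prod locally_bounded_power
          locally_bounded_cadlag_max0) auto
    moreover have "\<forall>s\<ge>0. ?h s = (\<Sum>\<mu>\<in>K. b \<mu> s * mpow I \<mu> (X s \<omega>))"
      unfolding mpow_def by simp
    ultimately show "\<exists>h. h \<in> borel_measurable borel \<and> locally_bounded h \<and>
        (\<forall>s\<ge>0. h s = (\<Sum>\<mu>\<in>K. b \<mu> s * mpow I \<mu> (X s \<omega>)))"
      by blast
  qed
qed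

definition monomial_labelling :: "'i set \<Rightarrow> nat \<Rightarrow> 'j set \<Rightarrow> ('j \<Rightarrow> 'i \<Rightarrow> nat) \<Rightarrow> bool" where
  "monomial_labelling I m J \<phi> \<longleftrightarrow> finite J \<and> insert (\<lambda>_. 0) (\<phi> ` J) = multi_le I m"

lemma vnorm_power_le_monomial_family:
  assumes I: "finite I" and "1 \<le> n" and lab: "monomial_labelling I n J \<phi>"
    and z: "\<And>k. k \<in> J \<Longrightarrow> z k = mpow I (\<phi> k) x"
  shows "vnorm I x ^ n \<le> real (card I) ^ n * (1 + vnorm J z)"
proof (cases "I = {}")
  case True
  then show ?thesis
    using \<open>1 \<le> n\<close> by (simp add: vnorm_def power_0_left)
next
  case False
  then obtain i where "i \<in> I" and i: "vnorm I x ^ n \<le> real (card I) ^ n * \<bar>x i\<bar> ^ n"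
    using vnorm_power_le_max_coordinate[OF I] by blast
  have "power_index i n \<in> insert (\<lambda>_. 0) (\<phi> ` J)"
    using lab power_index_in_multi_le[OF \<open>i \<in> I\<close>] unfolding monomial_labelling_def by blast
  then obtain k where "k \<in> J" "\<phi> k = power_index i n"
    using \<open>1 \<le> n\<close> power_index_eq_zero_iff[of i n] by force
  then have "\<bar>x i\<bar> ^ n = \<bar>z k\<bar>"
    using z I \<open>i \<in> I\<close> by (simp add: mpow_power_index power_abs)
  also have "\<dots> \<le> 1 + vnorm J z"
    using lab \<open>k \<in> J\<close> abs_le_vnorm[of J k z] unfolding monomial_labelling_def by simp
  finally show ?thesis
    using i by (meson mult_left_mono of_nat_0_le_iff order_trans zero_le_power)
qed

lemma polynomial_process_monomial_family:
  fixes X :: "real \<Rightarrow> 'a \<Rightarrow> 'i \<Rightarrow> real" and Z :: "real \<Rightarrow> 'a \<Rightarrow> 'j \<Rightarrow> real"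
  assumes rc: "rc_filtration M F" and I: "finite I" and X: "polynomial_process M F I n X"
    and lab: "monomial_labelling I m J \<phi>" and "m \<le> n"
    and Z: "\<And>t \<omega> k. k \<in> J \<Longrightarrow> Z t \<omega> k = mpow I (\<phi> k) (X t \<omega>)"
  shows "polynomial_process M F J 1 Z"
proof -
  have J: "finite J" and labels: "insert (\<lambda>_. 0) (\<phi> ` J) = multi_le I m"
    using lab unfolding monomial_labelling_def by auto
  have labels_n: "\<phi> k \<in> multi_le I n" if "k \<in> J" for k
    using labels that multi_le_mono[OF \<open>m \<le> n\<close>] by blast
  then have drift: "monomial_drift_in M F I X (\<phi> k) (multi_le I (deg I (\<phi> k)))" if "k \<in> J" for k
    using X that unfolding polynomial_process_iff by blast
  have "vsemimartingale M F J Z"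
    unfolding vsemimartingale_def
  proof
    fix k assume "k \<in> J"
    then have "semimartingale M F (\<lambda>t \<omega>. mpow I (\<phi> k) (X t \<omega>))"
      using X by (intro semimartingale_monomial[OF rc _ I drift]) (auto simp: polynomial_process_iff)
    then show "semimartingale M F (\<lambda>t \<omega>. Z t \<omega> k)"
      using \<open>k \<in> J\<close> by (simp add: Z)
  qed
  moreover have "finite_time_moment M (\<lambda>s \<omega>. vnorm J (Z s \<omega>))"
  proof (rule finite_time_moment_affine_bound[OF rc_filtration_prob_space[OF rc]])
    show "finite_time_moment M (\<lambda>s \<omega>. vnorm I (X s \<omega>) ^ n)"
      using X by (simp add: polynomial_process_iff)
    fix s \<omega>
    show "vnorm J (Z s \<omega>) \<le> real (card J) * (1 + vnorm I (X s \<omega>) ^ n)"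
    proof (rule vnorm_le_card_mult[OF J])
      fix k assume "k \<in> J"
      then have "deg I (\<phi> k) \<le> n"
        using labels_n deg_le_if_in_multi_le by blast
      then show "\<bar>Z s \<omega> k\<bar> \<le> 1 + vnorm I (X s \<omega>) ^ n"
        using \<open>k \<in> J\<close> by (simp add: Z abs_mpow_le[OF I])
    qed
  qed (simp_all add: vnorm_nonneg)
  moreover have "affine_drift M F J Z k" if "k \<in> J" for k
  proof (rule affine_drift_if_monomial_drift[where I=I and X=X and Z=Z and \<phi>=\<phi>,
        OF J finite_multi_le[OF I] zero_in_multi_le _ Z that drift[OF that]])
    have "deg I (\<phi> k) \<le> m"
      using labels that deg_le_if_in_multi_le by blast
    then show "multi_le I (deg I (\<phi> k)) \<subseteq> insert (\<lambda>_. 0) (\<phi> ` J)"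
      unfolding labels by (rule multi_le_mono)
  qed
  ultimately show ?thesis
    unfolding polynomial_process_one_iff[OF rc J] by blast
qed

lemma polynomial_process_if_monomial_families:
  fixes X :: "real \<Rightarrow> 'a \<Rightarrow> 'i \<Rightarrow> real" and Z :: "real \<Rightarrow> 'a \<Rightarrow> 'j \<Rightarrow> real"
  assumes rc: "rc_filtration M F" and I: "finite I" and X: "vsemimartingale M F I X" and "1 \<le> n"
    and lab: "\<And>m. m \<in> {1..n} \<Longrightarrow> monomial_labelling I m (J m) \<phi>"
    and Z: "\<And>m t \<omega> k. m \<in> {1..n} \<Longrightarrow> k \<in> J m \<Longrightarrow> Z t \<omega> k = mpow I (\<phi> k) (X t \<omega>)"
    and Z_poly: "\<And>m. m \<in> {1..n} \<Longrightarrow> polynomial_process M F (J m) 1 Z"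
  shows "polynomial_process M F I n X"
proof -
  have J: "finite (J m)" and labels: "insert (\<lambda>_. 0) (\<phi> ` J m) = multi_le I m" if "m \<in> {1..n}" for m
    using lab[OF that] unfolding monomial_labelling_def by auto
  have Z_parts: "finite_time_moment M (\<lambda>s \<omega>. vnorm (J m) (Z s \<omega>))" "\<forall>k\<in>J m. affine_drift M F (J m) Z k"
    if "m \<in> {1..n}" for m
    using Z_poly[OF that] polynomial_process_one_iff[OF rc J[OF that]] by blast+
  have "n \<in> {1..n}"
    using \<open>1 \<le> n\<close> by simp
  have "finite_time_moment M (\<lambda>s \<omega>. vnorm I (X s \<omega>) ^ n)"
  proof (rule finite_time_moment_affine_bound[OF rc_filtration_prob_space[OF rc] Z_parts(1)])
    show "vnorm I (X s \<omega>) ^ n \<le> real (card I) ^ n * (1 + vnorm (J n) (Z s \<omega>))" for s \<omega>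
      using \<open>1 \<le> n\<close> Z[OF \<open>n \<in> {1..n}\<close>]
      by (intro vnorm_power_le_monomial_family[OF I _ lab[OF \<open>n \<in> {1..n}\<close>]]) auto
  qed (use \<open>1 \<le> n\<close> in \<open>simp_all add: vnorm_nonneg\<close>)
  moreover have "monomial_drift_in M F I X l (multi_le I (deg I l))" if l: "l \<in> multi_le I n" for l
  proof (cases "l = (\<lambda>_. 0)")
    case True
    then show ?thesis
      using monomial_drift_in_zero[OF rc] by simp
  next
    case False
    define m where "m = deg I l"
    have m: "m \<in> {1..n}"
      using deg_pos_if_nonzero[OF I l False] deg_le_if_in_multi_le[OF l] unfolding m_def by simp
    then obtain k where "k \<in> J m" "\<phi> k = l"
      using labels[OF m] in_multi_le_deg[OF l] False unfolding m_def by auto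
    have "\<phi> ` J m \<subseteq> multi_le I m"
      using labels[OF m] by blast
    then have "monomial_drift_in M F I X (\<phi> k) (multi_le I m)"
      using Z_parts(2)[OF m] \<open>k \<in> J m\<close>
      by (intro monomial_drift_if_affine_drift[where I=I and X=X and Z=Z and \<phi>=\<phi>,
          OF J[OF m] finite_multi_le[OF I] zero_in_multi_le _ Z[OF m]]) auto
    then show ?thesis
      unfolding m_def \<open>\<phi> k = l\<close> .
  qed
  ultimately show ?thesis
    using X by (simp add: polynomial_process_iff)
qed

section \<open>Kronecker powers of \<open>(1, x)\<close>\<close>

text \<open>A word \<open>js\<close> over \<open>{0..d}\<close> indexes the entry \<open>\<Prod>j\<leftarrow>js. (1, x)\<^sub>j\<close> of the Kronecker power; it is
  the monomial whose exponent of \<open>x\<^sub>i\<close> is the number of occurrences of the letter \<open>i + 1\<close>.\<close>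

definition kron_exponent :: "nat \<Rightarrow> nat list \<Rightarrow> nat \<Rightarrow> nat" where
  "kron_exponent d js i = (if i < d then count_list js (Suc i) else 0)"

lemma kron_pow_one_ext:
  "set js \<subseteq> {..d} \<Longrightarrow> kron_pow (one_ext x) js = mpow {..<d} (kron_exponent d js) x"
proof (induction js)
  case Nil
  then show ?case
    by (simp add: kron_pow_def mpow_def kron_exponent_def)
next
  case (Cons j js)
  have "one_ext x j = (\<Prod>i\<in>{..<d}. x i ^ (if j = Suc i then 1 else 0))"
  proof (cases j)
    case (Suc i)
    then have "i < d"
      using Cons.prems by simp
    then show ?thesis
      using Suc by (simp add: one_ext_def if_distrib[of "\<lambda>k. _ ^ k"] prod.delta cong: if_cong)
  qed (simp add: one_ext_def)
  moreover have "mpow {..<d} (kron_exponent d (j # js)) x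
      = (\<Prod>i<d. x i ^ (if j = Suc i then 1 else 0) * x i ^ kron_exponent d js i)"
    unfolding mpow_def kron_exponent_def by (intro prod.cong) (auto simp: power_add)
  ultimately have "mpow {..<d} (kron_exponent d (j # js)) x = one_ext x j * mpow {..<d} (kron_exponent d js) x"
    by (simp add: prod.distrib mpow_def)
  then show ?case
    using Cons by (simp add: kron_pow_def)
qed

lemma kron_exponent_in_multi_le:
  assumes "js \<in> kron_index d m"
  shows "kron_exponent d js \<in> multi_le {..<d} m"
proof -
  have "(\<Sum>i<d. count_list js (Suc i)) = (\<Sum>j\<in>{1..d}. count_list js j)"
    by (rule sum.reindex_bij_witness[of _ "\<lambda>j. j - 1" Suc]) auto
  also have "\<dots> \<le> (\<Sum>j\<in>{..d}. count_list js j)"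
    by (intro sum_mono2) auto
  also have "\<dots> = m"
    using assms unfolding kron_index_def by (simp add: sum_count_set)
  finally show ?thesis
    unfolding multi_le_def kron_exponent_def by simp
qed

lemma kron_exponent_surj:
  assumes \<nu>: "\<nu> \<in> multi_le {..<d} m"
  shows "\<nu> \<in> kron_exponent d ` kron_index d m"
proof
  let ?letters = "concat (map (\<lambda>i. replicate (\<nu> i) (Suc i)) [0..<d])"
  define js where "js = replicate (m - deg {..<d} \<nu>) 0 @ ?letters"
  have "length ?letters = deg {..<d} \<nu>"
    by (simp add: length_concat comp_def interv_sum_list_conv_sum_set_nat atLeast0LessThan deg_def)
  then show "js \<in> kron_index d m"
    using deg_le_if_in_multi_le[OF \<nu>] unfolding kron_index_def js_def by auto
  have "count_list js (Suc i) = \<nu> i" if "i < d" for i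
  proof -
    have "count_list js (Suc i) = sum_list (map (\<lambda>k. if i = k then \<nu> k else 0) [0..<d])"
      unfolding js_def count_list_eq_length_filter
      by (simp add: filter_concat length_concat comp_def filter_replicate if_distrib[of length] cong: if_cong)
    also have "\<dots> = \<nu> i"
      using that by (simp add: interv_sum_list_conv_sum_set_nat atLeast0LessThan)
    finally show ?thesis .
  qed
  then show "\<nu> = kron_exponent d js"
    using \<nu> unfolding kron_exponent_def multi_le_def by auto
qed

lemma finite_kron_index: "finite (kron_index d m)"
proof -
  have "kron_index d m = {js. set js \<subseteq> {..d} \<and> length js = m}"
    unfolding kron_index_def by auto
  then show ?thesis
    using finite_lists_length_eq[of "{..d}" m] by simp
qed

lemma monomial_labelling_kron_index: "monomial_labelling {..<d} m (kron_index d m) (kron_exponent d)"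
proof -
  have "kron_exponent d ` kron_index d m = multi_le {..<d} m"
    using kron_exponent_in_multi_le kron_exponent_surj by blast
  then show ?thesis
    unfolding monomial_labelling_def by (simp add: finite_kron_index insert_absorb)
qed

lemma monomial_labelling_nonzero:
  "finite I \<Longrightarrow> monomial_labelling I m (multi_le I m - {\<lambda>_. 0}) (\<lambda>l. l)"
  unfolding monomial_labelling_def by (auto simp: finite_multi_le)

theorem lemma2p4:
  fixes M :: "'a measure" and F :: "real \<Rightarrow> 'a measure"
    and X :: "real \<Rightarrow> 'a \<Rightarrow> nat \<Rightarrow> real" and d n :: nat
  assumes "rc_filtration M F"
    and "vsemimartingale M F {..<d} X"
    and "1 \<le> n"
  shows "(polynomial_process M F {..<d} n X
            \<longleftrightarrow> (\<forall>m\<in>{1..n}. polynomial_process M F (multi_le {..<d} m - {\<lambda>_. 0}) 1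
                                 (\<lambda>t \<omega> l. mpow {..<d} l (X t \<omega>))))
       \<and> (polynomial_process M F {..<d} n X
            \<longleftrightarrow> (\<forall>m\<in>{1..n}. polynomial_process M F (kron_index d m) 1
                                 (\<lambda>t \<omega>. kron_pow (one_ext (X t \<omega>)))))"
proof -
  note rc = assms(1) and X = assms(2) and n = assms(3)
  have I: "finite {..<d}"
    by simp
  have kron: "kron_pow (one_ext x) js = mpow {..<d} (kron_exponent d js) x" if "js \<in> kron_index d m" for x js m
    using that unfolding kron_index_def by (simp add: kron_pow_one_ext)
  show ?thesis
    using polynomial_process_monomial_family[OF rc I _ monomial_labelling_nonzero[OF I]]
      polynomial_process_if_monomial_families[OF rc I X n monomial_labelling_nonzero[OF I]]
      polynomial_process_monomial_family[OF rc I _ monomial_labelling_kron_index _ kron]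
      polynomial_process_if_monomial_families[OF rc I X n monomial_labelling_kron_index kron]
    by auto
qed

end
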